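(* Let $(\mathfrak g,J,g)$ be an almost abelian Lie algebra of real dimension $2n$ with a Hermitian structure, and let $e$ be any admissible frame, with data $\lambda\in\mathbb R$, $v\in\mathbb C^{n-1}$, $A\in M_{n-1}(\mathbb C)$. Then the following are equivalent: (a) $g$ is Bismut torsion-parallel; (b) $g$ is Bismut Kähler-like; (c) $A+A^{\ast}=0$ and $Av=0$.
   Context: Setup: $\mathfrak g$ is a real Lie algebra of dimension $2n$ with an integrable almost complex structure $J$ (i.e. $[x,y]-[Jx,Jy]+J[Jx,y]+J[x,Jy]=0$ for all $x,y$) and a $J$-invariant inner product $g$; $(J,g)$ is called a Hermitian structure, and all objects are viewed as left-invariant objects on the simply connected Lie group $G$ of $\mathfrak g$. Put $\mathfrak g^{1,0}=\{x-\sqrt{-1}Jx: x\in\mathfrak g\}$, extend $g$ complex-bilinearly; a unitary frame is a basis $e_1,\dots,e_n$ of $\mathfrak g^{1,0}$ with $g(e_i,\bar e_j)=\delta_{ij}$, and $\varphi_1,\dots,\varphi_n$ is the dual coframe of $(1,0)$-forms; $d$ is the Chevalley–Eilenberg differential ($d\alpha(x,y)=-\alpha([x,y])$ on $1$-forms). $\mathfrak g$ is almost abelian if it is non-abelian and contains an abelian ideal of codimension one. An admissible frame for an almost abelian $\mathfrak g$ is a unitary frame whose dual coframe satisfies $d\varphi_1=-\lambda\,\varphi_1\wedge\bar\varphi_1$, $\ d\varphi_i=-\bar v_i\,\varphi_1\wedge\bar\varphi_1+\sum_{j=2}^n\overline{A_{ij}}\,(\varphi_1+\bar\varphi_1)\wedge\varphi_j$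 ($2\le i\le n$), for some $\lambda\in\mathbb R$, $v=(v_2,\dots,v_n)^t\in\mathbb C^{n-1}$, $A=(A_{ij})_{2\le i,j\le n}$ (such frames always exist). $A^\ast=\overline{A}^{\,t}$. The Bismut connection $\nabla^b$ is the unique connection with $\nabla^bJ=0$, $\nabla^bg=0$ and totally skew-symmetric torsion. $g$ is Bismut torsion-parallel (BTP) if the torsion of $\nabla^b$ is $\nabla^b$-parallel; $g$ is Bismut Kähler-like (BKL) if the curvature $R^b$ of $\nabla^b$ obeys all Kähler symmetries, i.e. $R^b(X,Y)=0$ whenever $X,Y$ are both of type $(1,0)$ (or both of type $(0,1)$), and $R^b_{i\bar jk\bar\ell}=R^b_{k\bar ji\bar\ell}$ for all indices, where $R^b_{i\bar jk\bar\ell}=g(R^b(e_i,\bar e_j)e_k,\bar e_\ell)$. *)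

theory Defs
  imports "HOL-Analysis.Analysis"
begin

text \<open>A left-invariant object on the simply connected Lie group is identified with
the corresponding object on the Lie algebra. The Lie algebra is a finite dimensional
real vector space (a type of class euclidean_space; its own inner product is NOT used,
the metric g is a separate parameter).\<close>

definition lie_algebra :: "('v::euclidean_space \<Rightarrow> 'v \<Rightarrow> 'v) \<Rightarrow> bool" where
  "lie_algebra br \<longleftrightarrow> bilinear br \<and> (\<forall>x y. br x y = - br y x) \<and>
     (\<forall>x y z. br x (br y z) + br y (br z x) + br z (br x y) = 0)"

definition integrable_acs :: "('v::euclidean_space \<Rightarrow> 'v \<Rightarrow> 'v) \<Rightarrow> ('v \<Rightarrow> 'v) \<Rightarrow> bool" where
  "integrable_acs br J \<longleftrightarrow> linear J \<and> (\<forall>x. J (J x) = - x) \<and>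
     (\<forall>x y. br x y - br (J x) (J y) + J (br (J x) y) + J (br x (J y)) = 0)"

definition J_inv_inner :: "('v::euclidean_space \<Rightarrow> 'v \<Rightarrow> real) \<Rightarrow> ('v \<Rightarrow> 'v) \<Rightarrow> bool" where
  "J_inv_inner g J \<longleftrightarrow> bilinear g \<and> (\<forall>x y. g x y = g y x) \<and> (\<forall>x. x \<noteq> 0 \<longrightarrow> g x x > 0) \<and>
     (\<forall>x y. g (J x) (J y) = g x y)"

definition hermitian_lie_algebra ::
  "('v::euclidean_space \<Rightarrow> 'v \<Rightarrow> 'v) \<Rightarrow> ('v \<Rightarrow> 'v) \<Rightarrow> ('v \<Rightarrow> 'v \<Rightarrow> real) \<Rightarrow> bool" where
  "hermitian_lie_algebra br J g \<longleftrightarrow> lie_algebra br \<and> integrable_acs br J \<and> J_inv_inner g J"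

definition almost_abelian :: "('v::euclidean_space \<Rightarrow> 'v \<Rightarrow> 'v) \<Rightarrow> bool" where
  "almost_abelian br \<longleftrightarrow> (\<exists>x y. br x y \<noteq> 0) \<and>
     (\<exists>h. subspace h \<and> dim h + 1 = DIM('v) \<and> (\<forall>x y. y \<in> h \<longrightarrow> br x y \<in> h) \<and>
          (\<forall>x\<in>h. \<forall>y\<in>h. br x y = 0))"

text \<open>The complexification g^C is modelled as pairs (a,b), standing for a + sqrt(-1) b.\<close>

definition cscale :: "complex \<Rightarrow> 'v::real_vector \<times> 'v \<Rightarrow> 'v \<times> 'v" where
  "cscale c z = (Re c *\<^sub>R fst z - Im c *\<^sub>R snd z, Re c *\<^sub>R snd z + Im c *\<^sub>R fst z)"

definition cconj :: "'v::real_vector \<times> 'v \<Rightarrow> 'v \<times> 'v" where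
  "cconj z = (fst z, - snd z)"

definition cbil :: "('v::real_vector \<Rightarrow> 'w::real_vector \<Rightarrow> 'u::real_vector) \<Rightarrow> 'v \<times> 'v \<Rightarrow> 'w \<times> 'w \<Rightarrow> 'u \<times> 'u" where
  "cbil B z w = (B (fst z) (fst w) - B (snd z) (snd w), B (fst z) (snd w) + B (snd z) (fst w))"

definition cmetric :: "('v::real_vector \<Rightarrow> 'v \<Rightarrow> real) \<Rightarrow> 'v \<times> 'v \<Rightarrow> 'v \<times> 'v \<Rightarrow> complex" where
  "cmetric g z w = Complex (g (fst z) (fst w) - g (snd z) (snd w)) (g (fst z) (snd w) + g (snd z) (fst w))"

definition g10 :: "('v::real_vector \<Rightarrow> 'v) \<Rightarrow> ('v \<times> 'v) set" where
  "g10 J = {(x, - J x) | x. True}"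

definition g01 :: "('v::real_vector \<Rightarrow> 'v) \<Rightarrow> ('v \<times> 'v) set" where
  "g01 J = {(x, J x) | x. True}"

definition unitary_frame ::
  "nat \<Rightarrow> ('v::euclidean_space \<Rightarrow> 'v) \<Rightarrow> ('v \<Rightarrow> 'v \<Rightarrow> real) \<Rightarrow> (nat \<Rightarrow> 'v \<times> 'v) \<Rightarrow> bool" where
  "unitary_frame n J g e \<longleftrightarrow>
     (\<forall>i\<in>{1..n}. e i \<in> g10 J) \<and>
     (\<forall>i\<in>{1..n}. \<forall>j\<in>{1..n}. cmetric g (e i) (cconj (e j)) = (if i = j then 1 else 0)) \<and>
     (\<forall>z\<in>g10 J. \<exists>c. z = (\<Sum>i=1..n. cscale (c i) (e i))) \<and>
     (\<forall>c. (\<Sum>i=1..n. cscale (c i) (e i)) = 0 \<longrightarrow> (\<forall>i\<in>{1..n}. c i = 0))"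

definition clinear_form :: "('v::real_vector \<times> 'v \<Rightarrow> complex) \<Rightarrow> bool" where
  "clinear_form \<alpha> \<longleftrightarrow> (\<forall>z w. \<alpha> (z + w) = \<alpha> z + \<alpha> w) \<and> (\<forall>c z. \<alpha> (cscale c z) = c * \<alpha> z)"

definition dual_coframe :: "nat \<Rightarrow> (nat \<Rightarrow> 'v::real_vector \<times> 'v) \<Rightarrow> (nat \<Rightarrow> 'v \<times> 'v \<Rightarrow> complex) \<Rightarrow> bool" where
  "dual_coframe n e \<phi> \<longleftrightarrow> (\<forall>i\<in>{1..n}. clinear_form (\<phi> i) \<and>
      (\<forall>j\<in>{1..n}. \<phi> i (e j) = (if i = j then 1 else 0) \<and> \<phi> i (cconj (e j)) = 0))"

definition conj_form :: "('v::real_vector \<times> 'v \<Rightarrow> complex) \<Rightarrow> 'v \<times> 'v \<Rightarrow> complex" where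
  "conj_form \<alpha> z = cnj (\<alpha> (cconj z))"

definition wedge :: "('a \<Rightarrow> complex) \<Rightarrow> ('a \<Rightarrow> complex) \<Rightarrow> 'a \<Rightarrow> 'a \<Rightarrow> complex" where
  "wedge \<alpha> \<beta> z w = \<alpha> z * \<beta> w - \<alpha> w * \<beta> z"

definition dform :: "('v::real_vector \<Rightarrow> 'v \<Rightarrow> 'v) \<Rightarrow> ('v \<times> 'v \<Rightarrow> complex) \<Rightarrow> 'v \<times> 'v \<Rightarrow> 'v \<times> 'v \<Rightarrow> complex" where
  "dform br \<alpha> z w = - \<alpha> (cbil br z w)"

definition admissible_eqs ::
  "nat \<Rightarrow> ('v::real_vector \<Rightarrow> 'v \<Rightarrow> 'v) \<Rightarrow> (nat \<Rightarrow> 'v \<times> 'v \<Rightarrow> complex) \<Rightarrow> real \<Rightarrow> (nat \<Rightarrow> complex)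
     \<Rightarrow> (nat \<Rightarrow> nat \<Rightarrow> complex) \<Rightarrow> bool" where
  "admissible_eqs n br \<phi> lam v A \<longleftrightarrow>
     (\<forall>z w. dform br (\<phi> 1) z w = - complex_of_real lam * wedge (\<phi> 1) (conj_form (\<phi> 1)) z w) \<and>
     (\<forall>i\<in>{2..n}. \<forall>z w. dform br (\<phi> i) z w =
        - cnj (v i) * wedge (\<phi> 1) (conj_form (\<phi> 1)) z w
        + (\<Sum>j=2..n. cnj (A i j) * wedge (\<lambda>u. \<phi> 1 u + conj_form (\<phi> 1) u) (\<phi> j) z w))"

text \<open>Left-invariant connections are bilinear maps nabla x y = nabla_x y.\<close>
definition torsion :: "('v::real_vector \<Rightarrow> 'v \<Rightarrow> 'v) \<Rightarrow> ('v \<Rightarrow> 'v \<Rightarrow> 'v) \<Rightarrow> 'v \<Rightarrow> 'v \<Rightarrow> 'v" where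
  "torsion br nb x y = nb x y - nb y x - br x y"

definition is_bismut_conn ::
  "('v::euclidean_space \<Rightarrow> 'v \<Rightarrow> 'v) \<Rightarrow> ('v \<Rightarrow> 'v) \<Rightarrow> ('v \<Rightarrow> 'v \<Rightarrow> real) \<Rightarrow> ('v \<Rightarrow> 'v \<Rightarrow> 'v) \<Rightarrow> bool" where
  "is_bismut_conn br J g nb \<longleftrightarrow> bilinear nb \<and>
     (\<forall>x y. nb x (J y) = J (nb x y)) \<and>
     (\<forall>x y z. g (nb x y) z + g y (nb x z) = 0) \<and>
     (\<forall>x y z. g (torsion br nb x y) z = - g (torsion br nb x z) y)"

definition bismut :: "('v::euclidean_space \<Rightarrow> 'v \<Rightarrow> 'v) \<Rightarrow> ('v \<Rightarrow> 'v) \<Rightarrow> ('v \<Rightarrow> 'v \<Rightarrow> real) \<Rightarrow> 'v \<Rightarrow> 'v \<Rightarrow> 'v" where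
  "bismut br J g = (THE nb. is_bismut_conn br J g nb)"

definition BTP :: "('v::euclidean_space \<Rightarrow> 'v \<Rightarrow> 'v) \<Rightarrow> ('v \<Rightarrow> 'v) \<Rightarrow> ('v \<Rightarrow> 'v \<Rightarrow> real) \<Rightarrow> bool" where
  "BTP br J g \<longleftrightarrow> (let nb = bismut br J g; T = torsion br nb in
     \<forall>x y z. nb x (T y z) - T (nb x y) z - T y (nb x z) = 0)"

definition ccurv :: "('v::real_vector \<Rightarrow> 'v \<Rightarrow> 'v) \<Rightarrow> ('v \<Rightarrow> 'v \<Rightarrow> 'v) \<Rightarrow> 'v \<times> 'v \<Rightarrow> 'v \<times> 'v \<Rightarrow> 'v \<times> 'v \<Rightarrow> 'v \<times> 'v" where
  "ccurv br nb X Y Z = cbil nb X (cbil nb Y Z) - cbil nb Y (cbil nb X Z) - cbil nb (cbil br X Y) Z"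

definition BKL :: "nat \<Rightarrow> ('v::euclidean_space \<Rightarrow> 'v \<Rightarrow> 'v) \<Rightarrow> ('v \<Rightarrow> 'v) \<Rightarrow> ('v \<Rightarrow> 'v \<Rightarrow> real)
     \<Rightarrow> (nat \<Rightarrow> 'v \<times> 'v) \<Rightarrow> bool" where
  "BKL n br J g e \<longleftrightarrow> (let R = ccurv br (bismut br J g) in
     (\<forall>X\<in>g10 J. \<forall>Y\<in>g10 J. \<forall>Z. R X Y Z = 0) \<and>
     (\<forall>X\<in>g01 J. \<forall>Y\<in>g01 J. \<forall>Z. R X Y Z = 0) \<and>
     (\<forall>i\<in>{1..n}. \<forall>j\<in>{1..n}. \<forall>k\<in>{1..n}. \<forall>l\<in>{1..n}.
        cmetric g (R (e i) (cconj (e j)) (e k)) (cconj (e l))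
        = cmetric g (R (e k) (cconj (e j)) (e i)) (cconj (e l))))"

end

theory Submission
  imports Defs
begin

text \<open>
  Write \<open>e\<^sub>1 = u - \<i> J u\<close>. The structure equation for \<open>\<phi>\<^sub>1\<close> shows that
  \<open>N = {u, J u}\<^sup>\<perp>\<close> is an abelian ideal, and the equations for \<open>\<phi>\<^sub>i\<close> show that \<open>J u\<close> acts
  trivially on \<open>N\<close>, while \<open>D = ad u|\<^sub>N\<close> commutes with \<open>J\<close> and acts on the frame by \<open>-A\<^sup>-\<close>.
  So the whole bracket is determined by \<open>\<lambda>\<close>, the symmetric and skew parts \<open>D_sym, D_skew\<close> of
  \<open>D\<close>, and \<open>w = [u, J u] + \<lambda> J u \<in> N\<close>, whose frame coordinates are \<open>-\<i> v\<^sub>i\<^sup>-/2\<close>.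
  This allows writing down the Bismut connection explicitly. A direct computation then
  shows that \<open>\<nabla>\<^sup>bT = 0\<close> forces \<open>D_sym = 0\<close> and \<open>D_skew w = 0\<close>, and so do the Kaehler
  symmetries of \<open>R\<^sup>b\<close> on the frame; conversely, under these two conditions the torsion is
  parallel and \<open>R\<^sup>b\<close> lives on \<open>span{u, J u}\<close> only, where it has type (1,1).
  Finally \<open>D_sym = 0\<close> means \<open>A + A\<^sup>* = 0\<close>, and then \<open>D_skew w = 0\<close> means \<open>A v = 0\<close>.
\<close>

lemma trilinear_skew_J_vanishes:
  fixes a :: "'v \<Rightarrow> 'v \<Rightarrow> 'v \<Rightarrow> real" and J :: "'v \<Rightarrow> 'v"
  assumes skew23: "\<And>x y z. a x y z = - a x z y"
    and torsion_skew: "\<And>x y z. a x y z - a y x z = - (a x z y - a z x y)"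
    and J_skew: "\<And>x y z. a x (J y) z = - a x y (J z)"
    and J_surj: "surj J"
  shows "a x y z = 0"
proof -
  have double: "2 * a x y z = a x y z - a y x z" for x y z
    using torsion_skew[of x y z] torsion_skew[of y z x] torsion_skew[of z x y]
      skew23[of x y z] skew23[of y x z] skew23[of z x y] skew23[of y z x] skew23[of z y x]
    by linarith
  have cyclic: "a x y z = a y z x" for x y z
    using double[of x y z] double[of y x z] skew23[of y x z] by linarith
  have "a (J x) y z = 0" for x y z
    using cyclic[of z "J x" y] J_skew[of z x y] cyclic[of x "J y" z] cyclic[of "J y" z x]
      cyclic[of "J x" y z] J_skew[of y z x] cyclic[of y "J z" x] cyclic[of "J z" x y] J_skew[of x y z]
    by linarith
  with J_surj show ?thesis by (metis surjD)
qed

locale hermitian_lie =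
  fixes br :: "'v::euclidean_space \<Rightarrow> 'v \<Rightarrow> 'v" and J :: "'v \<Rightarrow> 'v" and g :: "'v \<Rightarrow> 'v \<Rightarrow> real"
  assumes hermitian: "hermitian_lie_algebra br J g"
begin

lemma bilinear_br: "bilinear br" and br_anti: "br x y = - br y x"
  using hermitian unfolding hermitian_lie_algebra_def lie_algebra_def by blast+

lemma linear_J: "linear J" and J_J[simp]: "J (J x) = - x"
  and integrable: "br x y - br (J x) (J y) + J (br (J x) y) + J (br x (J y)) = 0"
  using hermitian unfolding hermitian_lie_algebra_def integrable_acs_def by blast+

lemma bilinear_g: "bilinear g" and g_sym: "g x y = g y x" and g_pos: "x \<noteq> 0 \<Longrightarrow> g x x > 0"
  and g_J_J[simp]: "g (J x) (J y) = g x y"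
  using hermitian unfolding hermitian_lie_algebra_def J_inv_inner_def by blast+

lemma J_add[simp]: "J (x + y) = J x + J y" and J_scale[simp]: "J (c *\<^sub>R x) = c *\<^sub>R J x"
  and J_neg[simp]: "J (- x) = - J x" and J_diff[simp]: "J (x - y) = J x - J y" and J_zero[simp]: "J 0 = 0"
  using linear_J by (auto simp: linear_add linear_scale linear_neg linear_diff linear_0)

lemma g_addl[simp]: "g (x + y) z = g x z + g y z" and g_addr[simp]: "g z (x + y) = g z x + g z y"
  and g_scalel[simp]: "g (c *\<^sub>R x) y = c * g x y" and g_scaler[simp]: "g x (c *\<^sub>R y) = c * g x y"
  and g_negl[simp]: "g (- x) y = - g x y" and g_negr[simp]: "g x (- y) = - g x y"
  and g_diffl[simp]: "g (x - y) z = g x z - g y z" and g_diffr[simp]: "g z (x - y) = g z x - g z y"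
  and g_zerol[simp]: "g 0 x = 0" and g_zeror[simp]: "g x 0 = 0"
  using bilinear_g by (auto simp: bilinear_ladd bilinear_radd bilinear_lmul bilinear_rmul bilinear_lneg
      bilinear_rneg bilinear_lsub bilinear_rsub bilinear_lzero bilinear_rzero)

lemma g_suml: "g (sum f S) y = (\<Sum>i\<in>S. g (f i) y)"
proof -
  interpret linear "\<lambda>x. g x y" using bilinear_g by (simp add: bilinear_def)
  show ?thesis by (simp add: sum)
qed

lemma g_sumr: "g y (sum f S) = (\<Sum>i\<in>S. g y (f i))"
  unfolding g_sym[of y] by (rule g_suml)

lemma br_addl[simp]: "br (x + y) z = br x z + br y z" and br_addr[simp]: "br z (x + y) = br z x + br z y"
  and br_scalel[simp]: "br (c *\<^sub>R x) y = c *\<^sub>R br x y" and br_scaler[simp]: "br x (c *\<^sub>R y) = c *\<^sub>R br x y"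
  and br_negl[simp]: "br (- x) y = - br x y" and br_negr[simp]: "br x (- y) = - br x y"
  and br_diffl[simp]: "br (x - y) z = br x z - br y z" and br_diffr[simp]: "br z (x - y) = br z x - br z y"
  and br_zerol[simp]: "br 0 x = 0" and br_zeror[simp]: "br x 0 = 0"
  using bilinear_br by (auto simp: bilinear_ladd bilinear_radd bilinear_lmul bilinear_rmul bilinear_lneg
      bilinear_rneg bilinear_lsub bilinear_rsub bilinear_lzero bilinear_rzero)

lemma br_self[simp]: "br x x = 0"
  using br_anti[of x x] by (simp add: eq_neg_iff_add_eq_0 flip: scaleR_2)

lemma g_J_left: "g (J x) y = - g x (J y)"
  using g_J_J[of "J x" y] by simp

lemma g_J_swap: "g a (J b) = - g b (J a)"
  using g_J_left[of b a] g_sym[of "J b" a] by simp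

lemma g_eq_0I: "(\<And>t. g x t = 0) \<Longrightarrow> x = 0"
  using g_pos by force

lemma g_eqI: "(\<And>t. g x t = g y t) \<Longrightarrow> x = y"
  using g_eq_0I[of "x - y"] by simp

lemma is_bismut_connD:
  assumes "is_bismut_conn br J g nb"
  shows "nb x (J y) = J (nb x y)" and "g (nb x y) z + g y (nb x z) = 0"
    and "g (torsion br nb x y) z = - g (torsion br nb x z) y"
  using assms unfolding is_bismut_conn_def by blast+

lemma bismut_conn_unique:
  assumes nb: "is_bismut_conn br J g nb" and nb': "is_bismut_conn br J g nb'"
  shows "nb = nb'"
proof (intro ext g_eqI)
  fix x y t
  define a where "a x y z = g (nb x y) z - g (nb' x y) z" for x y z
  have "a x y t = 0"
  proof (rule trilinear_skew_J_vanishes[where J = J])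
    show "a x y z = - a x z y" for x y z
      using is_bismut_connD(2)[OF nb, of x y z] is_bismut_connD(2)[OF nb', of x y z]
      unfolding a_def by (simp add: g_sym[of y "nb x z"] g_sym[of y "nb' x z"])
    show "a x y z - a y x z = - (a x z y - a z x y)" for x y z
      using is_bismut_connD(3)[OF nb, of x y z] is_bismut_connD(3)[OF nb', of x y z]
      unfolding a_def torsion_def by simp
    show "a x (J y) z = - a x y (J z)" for x y z
      unfolding a_def is_bismut_connD(1)[OF nb] is_bismut_connD(1)[OF nb'] g_J_left by simp
    show "surj J" by (rule surjI[where f = "\<lambda>x. - J x"]) simp
  qed
  then show "g (nb x y) t = g (nb' x y) t" unfolding a_def by simp
qed

end

locale admissible_frame = hermitian_lie br J g for br :: "'v::euclidean_space \<Rightarrow> 'v \<Rightarrow> 'v" and J g +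
  fixes n :: nat and e :: "nat \<Rightarrow> 'v \<times> 'v" and \<phi> :: "nat \<Rightarrow> 'v \<times> 'v \<Rightarrow> complex"
    and lam :: real and v :: "nat \<Rightarrow> complex" and A :: "nat \<Rightarrow> nat \<Rightarrow> complex"
  assumes dim: "DIM('v) = 2 * n" and unitary: "unitary_frame n J g e"
    and dual: "dual_coframe n e \<phi>" and structure_eqs: "admissible_eqs n br \<phi> lam v A"
begin

definition re_e :: "nat \<Rightarrow> 'v" where "re_e k = fst (e k)"

lemma one_mem: "1 \<in> {1..n}"
  using dim DIM_positive[where 'a='v] by simp

lemma e_eq: "k \<in> {1..n} \<Longrightarrow> e k = (re_e k, - J (re_e k))"
  using unitary unfolding unitary_frame_def g10_def re_e_def by force

lemma cconj_e_eq: "k \<in> {1..n} \<Longrightarrow> cconj (e k) = (re_e k, J (re_e k))"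
  by (simp add: e_eq cconj_def)

lemma g_re_e: assumes "i \<in> {1..n}" "j \<in> {1..n}"
  shows "g (re_e i) (re_e j) = (if i = j then 1/2 else 0)" and "g (re_e i) (J (re_e j)) = 0"
proof -
  have "cmetric g (e i) (cconj (e j)) = (if i = j then 1 else 0)"
    using unitary assms unfolding unitary_frame_def by blast
  then have "Complex (2 * g (re_e i) (re_e j)) (2 * g (re_e i) (J (re_e j))) = (if i = j then 1 else 0)"
    using assms by (simp add: e_eq cmetric_def cconj_def g_J_left)
  then show "g (re_e i) (re_e j) = (if i = j then 1/2 else 0)" "g (re_e i) (J (re_e j)) = 0"
    by (auto simp: Complex_eq_0 Complex_eq_1 split: if_splits)
qed

lemma g_J_re_e: assumes "i \<in> {1..n}" "j \<in> {1..n}"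
  shows "g (J (re_e i)) (re_e j) = 0" and "g (J (re_e i)) (J (re_e j)) = (if i = j then 1/2 else 0)"
  using g_re_e[OF assms] by (simp_all add: g_J_left)

lemma frame_expansion:
  "y = (\<Sum>k\<in>{1..n}. (2 * g y (re_e k)) *\<^sub>R re_e k + (2 * g y (J (re_e k))) *\<^sub>R J (re_e k))"
proof -
  have "(y, - J y) \<in> g10 J" unfolding g10_def by blast
  then obtain c where c: "(y, - J y) = (\<Sum>i=1..n. cscale (c i) (e i))"
    using unitary unfolding unitary_frame_def by blast
  have y: "y = (\<Sum>i=1..n. Re (c i) *\<^sub>R re_e i + Im (c i) *\<^sub>R J (re_e i))"
  proof -
    have "y = (\<Sum>i=1..n. fst (cscale (c i) (e i)))"
      using arg_cong[OF c, of fst] by (simp add: fst_sum)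
    also have "\<dots> = (\<Sum>i=1..n. Re (c i) *\<^sub>R re_e i + Im (c i) *\<^sub>R J (re_e i))"
      by (rule sum.cong) (auto simp: e_eq cscale_def)
    finally show ?thesis .
  qed
  have re: "Re (c k) = 2 * g y (re_e k)" and im: "Im (c k) = 2 * g y (J (re_e k))"
    if k: "k \<in> {1..n}" for k
  proof -
    have "g y (re_e k) = (\<Sum>i=1..n. Re (c i) * g (re_e i) (re_e k) + Im (c i) * g (J (re_e i)) (re_e k))"
      by (subst y) (simp add: g_suml)
    also have "\<dots> = (\<Sum>i=1..n. if i = k then Re (c i) / 2 else 0)"
      by (rule sum.cong) (use k in \<open>auto simp: g_re_e g_J_re_e\<close>)
    finally show "Re (c k) = 2 * g y (re_e k)" using k by simp
    have "g y (J (re_e k)) = (\<Sum>i=1..n. Re (c i) * g (re_e i) (J (re_e k)) + Im (c i) * g (J (re_e i)) (J (re_e k)))"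
      by (subst y) (simp add: g_suml)
    also have "\<dots> = (\<Sum>i=1..n. if i = k then Im (c i) / 2 else 0)"
      by (rule sum.cong) (use k in \<open>auto simp: g_re_e g_J_re_e\<close>)
    finally show "Im (c k) = 2 * g y (J (re_e k))" using k by simp
  qed
  show ?thesis by (subst y) (auto intro: sum.cong simp: re im)
qed

definition coord :: "nat \<Rightarrow> 'v \<Rightarrow> complex" where "coord i y = \<phi> i (y, 0)"

lemma clinear_phi: "i \<in> {1..n} \<Longrightarrow> clinear_form (\<phi> i)"
  and phi_e: "i \<in> {1..n} \<Longrightarrow> j \<in> {1..n} \<Longrightarrow> \<phi> i (e j) = (if i = j then 1 else 0)"
  and phi_cconj_e: "i \<in> {1..n} \<Longrightarrow> j \<in> {1..n} \<Longrightarrow> \<phi> i (cconj (e j)) = 0"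
  using dual unfolding dual_coframe_def by auto

lemma phi_add: "i \<in> {1..n} \<Longrightarrow> \<phi> i (z + w) = \<phi> i z + \<phi> i w"
  and phi_cscale: "i \<in> {1..n} \<Longrightarrow> \<phi> i (cscale c z) = c * \<phi> i z"
  using clinear_phi unfolding clinear_form_def by blast+

lemma coord_add: "i \<in> {1..n} \<Longrightarrow> coord i (a + b) = coord i a + coord i b"
  unfolding coord_def by (metis phi_add add_Pair add_0)

lemma coord_scale: "i \<in> {1..n} \<Longrightarrow> coord i (r *\<^sub>R a) = of_real r * coord i a"
  unfolding coord_def using phi_cscale[of i "of_real r" "(a, 0)"] by (simp add: cscale_def)

lemma coord_zero: "i \<in> {1..n} \<Longrightarrow> coord i 0 = 0"
  using coord_scale[of i 0 0] by simp

lemma coord_sum: "i \<in> {1..n} \<Longrightarrow> coord i (sum f S) = (\<Sum>k\<in>S. coord i (f k))"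
  by (induction S rule: infinite_finite_induct) (auto simp: coord_zero coord_add)

lemma coord_re_e: assumes "i \<in> {1..n}" "k \<in> {1..n}"
  shows "coord i (re_e k) = (if i = k then 1/2 else 0)"
    and "coord i (J (re_e k)) = (if i = k then \<i>/2 else 0)"
proof -
  have "(re_e k, 0) = cscale (1/2) (e k) + cscale (1/2) (cconj (e k))"
    and "(J (re_e k), 0) = cscale (\<i>/2) (e k) + cscale (-\<i>/2) (cconj (e k))"
    using assms by (simp_all add: e_eq cscale_def cconj_def scaleR_2[symmetric])
  then show "coord i (re_e k) = (if i = k then 1/2 else 0)"
    and "coord i (J (re_e k)) = (if i = k then \<i>/2 else 0)"
    using phi_e[OF assms] phi_cconj_e[OF assms] unfolding coord_def
    by (simp_all add: phi_add[OF assms(1)] phi_cscale[OF assms(1)])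
qed

lemma coord_eq: assumes i: "i \<in> {1..n}" shows "coord i y = Complex (g y (re_e i)) (g y (J (re_e i)))"
proof -
  have "coord i y = (\<Sum>k\<in>{1..n}. of_real (2 * g y (re_e k)) * coord i (re_e k)
                                  + of_real (2 * g y (J (re_e k))) * coord i (J (re_e k)))"
    by (subst frame_expansion) (simp add: coord_sum[OF i] coord_add[OF i] coord_scale[OF i])
  also have "\<dots> = (\<Sum>k\<in>{1..n}. if k = i then Complex (g y (re_e i)) (g y (J (re_e i))) else 0)"
    by (rule sum.cong) (auto simp: coord_re_e[OF i] complex_eq_iff)
  finally show ?thesis using i by simp
qed

lemma eq_0_if_g_re_e_eq_0:
  assumes "\<And>i. i \<in> {1..n} \<Longrightarrow> g y (re_e i) = 0 \<and> g y (J (re_e i)) = 0" shows "y = 0"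
  using frame_expansion[of y] assms by (simp add: sum.neutral)

lemma eq_0_if_coord_eq_0: assumes "\<And>i. i \<in> {1..n} \<Longrightarrow> coord i y = 0" shows "y = 0"
  using assms coord_eq by (intro eq_0_if_g_re_e_eq_0) (simp add: Complex_eq_0)

text \<open>\<open>N\<close> is the abelian ideal, and \<open>w\<close> is the \<open>N\<close>-component of \<open>[u, J u]\<close>.\<close>

definition u :: 'v where "u = re_e 1"
definition N :: "'v set" where "N = {p. g p u = 0 \<and> g p (J u) = 0}"
definition w :: 'v where "w = br u (J u) + lam *\<^sub>R J u"

lemma mem_NI: "g p u = 0 \<Longrightarrow> g p (J u) = 0 \<Longrightarrow> p \<in> N"
  and mem_ND: "p \<in> N \<Longrightarrow> g p u = 0" "p \<in> N \<Longrightarrow> g p (J u) = 0"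
  unfolding N_def by simp_all

lemma g_u_u[simp]: "g u u = 1/2" and g_u_Ju[simp]: "g u (J u) = 0" and g_Ju_u[simp]: "g (J u) u = 0"
  and g_Ju_Ju[simp]: "g (J u) (J u) = 1/2"
  using g_re_e[OF one_mem one_mem] g_J_re_e[OF one_mem one_mem] unfolding u_def by auto

lemma re_e_Suc_0[simp]: "re_e (Suc 0) = u"
  by (simp add: u_def)

lemma e_Suc_0[simp]: "e (Suc 0) = (u, - J u)"
  using e_eq[OF one_mem] by simp

lemma re_e_mem_N: "k \<in> {2..n} \<Longrightarrow> re_e k \<in> N"
  using g_re_e[of k 1] g_J_re_e[of 1 k] g_sym[of "J (re_e 1)" "re_e k"] unfolding u_def
  by (intro mem_NI) auto

lemma J_mem_N: "p \<in> N \<Longrightarrow> J p \<in> N"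
  unfolding N_def by (simp add: g_J_left)

definition coord1 :: "'v \<Rightarrow> complex" where "coord1 y = Complex (g y u) (g y (J u))"

lemma coord_Suc_0[simp]: "coord (Suc 0) y = coord1 y"
  using coord_eq[OF one_mem] unfolding u_def coord1_def by simp

lemma coord1_add[simp]: "coord1 (a + b) = coord1 a + coord1 b"
  and coord1_scale[simp]: "coord1 (r *\<^sub>R a) = of_real r * coord1 a"
  and coord1_u: "coord1 u = 1/2" and coord1_Ju: "coord1 (J u) = \<i>/2"
  unfolding coord1_def by (simp_all add: complex_eq_iff)

lemma mem_N_iff_coord1: "p \<in> N \<longleftrightarrow> coord1 p = 0"
  unfolding N_def coord1_def by (simp add: Complex_eq_0)

lemma coord_u: "i \<in> {2..n} \<Longrightarrow> coord i u = 0" and coord_Ju: "i \<in> {2..n} \<Longrightarrow> coord i (J u) = 0"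
  using coord_re_e[of i 1] unfolding u_def by auto

lemma eq_0_if_coord1_coord_eq_0:
  assumes "coord1 y = 0" and "\<And>i. i \<in> {2..n} \<Longrightarrow> coord i y = 0" shows "y = 0"
proof (rule eq_0_if_coord_eq_0)
  fix i assume "i \<in> {1..n}"
  then consider "i = 1" | "i \<in> {2..n}" by fastforce
  then show "coord i y = 0" using assms by cases auto
qed

abbreviation wedge_11 :: "'v \<Rightarrow> 'v \<Rightarrow> complex" where
  "wedge_11 y z \<equiv> coord1 y * cnj (coord1 z) - coord1 z * cnj (coord1 y)"

lemma coord_br_eq_dform: "coord i (br y z) = - dform br (\<phi> i) (y, 0) (z, 0)"
  unfolding coord_def dform_def cbil_def by simp

lemma conj_form_real: "conj_form (\<phi> i) (y, 0) = cnj (coord i y)"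
  unfolding conj_form_def cconj_def coord_def by simp

lemma coord1_br: "coord1 (br y z) = lam * wedge_11 y z"
proof -
  have "dform br (\<phi> 1) (y, 0) (z, 0) = - complex_of_real lam * wedge (\<phi> 1) (conj_form (\<phi> 1)) (y, 0) (z, 0)"
    using structure_eqs unfolding admissible_eqs_def by blast
  then show ?thesis
    using coord_br_eq_dform[of 1 y z] unfolding wedge_def conj_form_real by (simp add: coord_def[symmetric])
qed

lemma coord_br: assumes i: "i \<in> {2..n}"
  shows "coord i (br y z) = cnj (v i) * wedge_11 y z
     - (\<Sum>j=2..n. cnj (A i j) * ((coord1 y + cnj (coord1 y)) * coord j z - (coord1 z + cnj (coord1 z)) * coord j y))"
proof -
  have "dform br (\<phi> i) (y, 0) (z, 0) = - cnj (v i) * wedge (\<phi> 1) (conj_form (\<phi> 1)) (y, 0) (z, 0)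
        + (\<Sum>j=2..n. cnj (A i j) * wedge (\<lambda>u. \<phi> 1 u + conj_form (\<phi> 1) u) (\<phi> j) (y, 0) (z, 0))"
    using structure_eqs i unfolding admissible_eqs_def by blast
  then show ?thesis
    using coord_br_eq_dform[of i y z] unfolding wedge_def conj_form_real
    by (simp add: coord_def[symmetric] algebra_simps sum_subtractf)
qed

lemma br_N_N: assumes "p \<in> N" "q \<in> N" shows "br p q = 0"
  using assms by (intro eq_0_if_coord1_coord_eq_0) (simp_all add: mem_N_iff_coord1 coord1_br coord_br)

lemma br_Ju_N: assumes "p \<in> N" shows "br (J u) p = 0"
  using assms
  by (intro eq_0_if_coord1_coord_eq_0) (simp_all add: mem_N_iff_coord1 coord1_br coord_br coord1_Ju)

lemma br_u_mem_N: "p \<in> N \<Longrightarrow> br u p \<in> N"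
  by (simp add: mem_N_iff_coord1 coord1_br)

lemma coord_br_u: assumes "p \<in> N" "i \<in> {2..n}"
  shows "coord i (br u p) = - (\<Sum>j=2..n. cnj (A i j) * coord j p)"
proof -
  have "(\<Sum>j=2..n. cnj (A i j) * ((coord1 u + cnj (coord1 u)) * coord j p - (coord1 p + cnj (coord1 p)) * coord j u))
      = (\<Sum>j=2..n. cnj (A i j) * coord j p)"
    using assms by (intro sum.cong) (auto simp: mem_N_iff_coord1 coord1_u)
  then show ?thesis using assms by (simp add: coord_br mem_N_iff_coord1)
qed

lemma w_mem_N: "w \<in> N"
  unfolding mem_N_iff_coord1 w_def by (simp add: coord1_br coord1_u coord1_Ju complex_eq_iff)

lemma coord_w: assumes i: "i \<in> {2..n}" shows "coord i w = - \<i> * cnj (v i) / 2"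
proof -
  have i1: "i \<in> {1..n}" using i by simp
  have "(\<Sum>j=2..n. cnj (A i j) * ((coord1 u + cnj (coord1 u)) * coord j (J u)
          - (coord1 (J u) + cnj (coord1 (J u))) * coord j u)) = 0"
    by (intro sum.neutral) (auto simp: coord_u coord_Ju)
  then show ?thesis unfolding w_def
    using i by (simp add: coord_add[OF i1] coord_scale[OF i1] coord_br coord1_u coord1_Ju coord_Ju complex_eq_iff)
qed

lemma br_u_J: assumes p: "p \<in> N" shows "br u (J p) = J (br u p)"
proof -
  have "br u p + J (br u (J p)) = 0"
    using integrable[of u p] br_Ju_N[OF p] br_Ju_N[OF J_mem_N[OF p]] by simp
  then have "J (br u p) + J (J (br u (J p))) = 0" by (metis J_add J_zero)
  then show ?thesis by (simp add: eq_neg_iff_add_eq_0[symmetric])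
qed

definition proj_N :: "'v \<Rightarrow> 'v" where "proj_N y = y - (2 * g y u) *\<^sub>R u - (2 * g y (J u)) *\<^sub>R J u"

definition D :: "'v \<Rightarrow> 'v" where "D y = br u (proj_N y)"
definition D_adj :: "'v \<Rightarrow> 'v" where
  "D_adj y = (\<Sum>k\<in>{1..n}. (2 * g y (D (re_e k))) *\<^sub>R re_e k + (2 * g y (D (J (re_e k)))) *\<^sub>R J (re_e k))"
definition D_sym :: "'v \<Rightarrow> 'v" where "D_sym y = (1/2) *\<^sub>R (D y + D_adj y)"
definition D_skew :: "'v \<Rightarrow> 'v" where "D_skew y = (1/2) *\<^sub>R (D y - D_adj y)"

lemma proj_N_mem_N: "proj_N y \<in> N"
  by (rule mem_NI) (simp_all add: proj_N_def)

lemma proj_N_add: "proj_N (a + b) = proj_N a + proj_N b" and proj_N_scale: "proj_N (r *\<^sub>R a) = r *\<^sub>R proj_N a"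
  and proj_N_J: "proj_N (J y) = J (proj_N y)"
  by (simp_all add: proj_N_def g_J_left algebra_simps)

lemma proj_N_id: "p \<in> N \<Longrightarrow> proj_N p = p"
  by (simp add: proj_N_def mem_ND)

lemma linear_D: "linear D"
  by (rule linearI) (simp_all add: D_def proj_N_add proj_N_scale)

lemma D_mem_N: "D y \<in> N" and D_J: "D (J y) = J (D y)" and D_eq_br_u: "p \<in> N \<Longrightarrow> D p = br u p"
  and D_u: "D u = 0" and D_Ju: "D (J u) = 0"
  by (simp_all add: D_def br_u_mem_N proj_N_mem_N proj_N_J br_u_J proj_N_id) (simp_all add: proj_N_def)

lemma g_D_adj_left: "g (D_adj y) z = g y (D z)"
proof -
  have "g (D_adj y) z = (\<Sum>k\<in>{1..n}. 2 * g y (D (re_e k)) * g (re_e k) z + 2 * g y (D (J (re_e k))) * g (J (re_e k)) z)"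
    by (simp add: D_adj_def g_suml)
  also have "\<dots> = (\<Sum>k\<in>{1..n}. g y (D ((2 * g z (re_e k)) *\<^sub>R re_e k + (2 * g z (J (re_e k))) *\<^sub>R J (re_e k))))"
    by (rule sum.cong) (simp_all add: linear_add[OF linear_D] linear_scale[OF linear_D] g_sym)
  also have "\<dots> = g y (D z)"
    by (subst (2) frame_expansion[of z]) (simp add: linear_sum[OF linear_D] g_sumr)
  finally show ?thesis .
qed

lemma g_D_left: "g (D y) z = g y (D_adj z)"
  using g_D_adj_left[of z y] g_sym by metis

lemma D_adj_mem_N: "D_adj y \<in> N"
  by (rule mem_NI) (simp_all add: g_D_adj_left D_u D_Ju)

lemma D_adj_add: "D_adj (a + b) = D_adj a + D_adj b" and D_adj_scale: "D_adj (r *\<^sub>R a) = r *\<^sub>R D_adj a"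
  and D_adj_J: "D_adj (J y) = J (D_adj y)" and D_adj_u: "D_adj u = 0"
  by (auto intro!: g_eqI simp: g_D_adj_left g_J_left D_J g_sym[of u] g_sym[of "J u"] mem_ND[OF D_mem_N])

lemma D_sym_add[simp]: "D_sym (a + b) = D_sym a + D_sym b"
  and D_sym_scale[simp]: "D_sym (r *\<^sub>R a) = r *\<^sub>R D_sym a"
  and D_skew_add[simp]: "D_skew (a + b) = D_skew a + D_skew b"
  and D_skew_scale[simp]: "D_skew (r *\<^sub>R a) = r *\<^sub>R D_skew a"
  by (simp_all add: D_sym_def D_skew_def linear_add[OF linear_D] linear_scale[OF linear_D]
      D_adj_add D_adj_scale algebra_simps)

lemma D_sym_neg[simp]: "D_sym (- a) = - D_sym a" and D_skew_neg[simp]: "D_skew (- a) = - D_skew a"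
  using D_sym_scale[of "-1" a] D_skew_scale[of "-1" a] by simp_all

lemma D_sym_diff[simp]: "D_sym (a - b) = D_sym a - D_sym b" and D_skew_diff[simp]: "D_skew (a - b) = D_skew a - D_skew b"
  using D_sym_add[of a "-b"] D_skew_add[of a "-b"] by simp_all

lemma D_sym_zero[simp]: "D_sym 0 = 0" and D_skew_zero[simp]: "D_skew 0 = 0"
  using D_sym_scale[of 0 0] D_skew_scale[of 0 0] by simp_all

lemma D_sym_J[simp]: "D_sym (J a) = J (D_sym a)" and D_skew_J[simp]: "D_skew (J a) = J (D_skew a)"
  and D_sym_u[simp]: "D_sym u = 0" and D_skew_u[simp]: "D_skew u = 0"
  by (simp_all add: D_sym_def D_skew_def D_J D_adj_J D_u D_adj_u)

lemma D_sym_mem_N: "D_sym y \<in> N" and D_skew_mem_N: "D_skew y \<in> N"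
  using D_mem_N[of y] D_adj_mem_N[of y] by (auto simp: D_sym_def D_skew_def N_def)

lemma g_D_sym_left: "g (D_sym a) b = g a (D_sym b)" and g_D_skew_left: "g (D_skew a) b = - g a (D_skew b)"
  by (simp_all add: D_sym_def D_skew_def g_D_left g_D_adj_left algebra_simps)

lemma D_eq_sym_plus_skew: "D y = D_sym y + D_skew y"
  by (simp add: D_sym_def D_skew_def scaleR_add_right[symmetric])

lemma D_sym_proj_N: "D_sym y = D_sym (proj_N y)"
  by (simp add: proj_N_def)

lemma D_sym_sum: "D_sym (sum f I) = (\<Sum>i\<in>I. D_sym (f i))"
  by (induction I rule: infinite_finite_induct) auto

lemma br_eq:
  "br x y = (4 * (g x u * g y (J u) - g x (J u) * g y u)) *\<^sub>R (w - lam *\<^sub>R J u)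
     + (2 * g x u) *\<^sub>R D y - (2 * g y u) *\<^sub>R D x"
proof -
  have decomp: "x = (2 * g x u) *\<^sub>R u + (2 * g x (J u)) *\<^sub>R J u + proj_N x" for x
    by (simp add: proj_N_def)
  have u_Ju: "br u (J u) = w - lam *\<^sub>R J u" by (simp add: w_def)
  have Ju_u: "br (J u) u = - (w - lam *\<^sub>R J u)" using br_anti[of "J u" u] u_Ju by simp
  have N_u: "br (proj_N a) u = - D a" for a using br_anti[of "proj_N a" u] by (simp add: D_def)
  have N_Ju: "br (proj_N a) (J u) = 0" for a using br_anti[of "proj_N a" "J u"] br_Ju_N[OF proj_N_mem_N] by simp
  have "br x y = br ((2 * g x u) *\<^sub>R u + (2 * g x (J u)) *\<^sub>R J u + proj_N x)
                    ((2 * g y u) *\<^sub>R u + (2 * g y (J u)) *\<^sub>R J u + proj_N y)"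
    using decomp[of x] decomp[of y] by simp
  also have "\<dots> = (4 * (g x u * g y (J u) - g x (J u) * g y u)) *\<^sub>R (w - lam *\<^sub>R J u)
     + (2 * g x u) *\<^sub>R D y - (2 * g y u) *\<^sub>R D x"
    by (simp add: u_Ju Ju_u N_u N_Ju br_Ju_N[OF proj_N_mem_N] br_N_N[OF proj_N_mem_N proj_N_mem_N]
        D_def[symmetric] algebra_simps scaleR_add_right scaleR_diff_right)
  finally show ?thesis .
qed

text \<open>Kept opaque so that simplification with \<open>g_normal_forms\<close> reaches a normal form.\<close>

definition comp_u :: "'v \<Rightarrow> real" where "comp_u a = g a u"
definition comp_Ju :: "'v \<Rightarrow> real" where "comp_Ju a = g a (J u)"
definition comp_w :: "'v \<Rightarrow> real" where "comp_w a = g a w"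

lemma g_comp:
  "g a u = comp_u a" "g u a = comp_u a" "g a (J u) = comp_Ju a" "g a w = comp_w a" "g w a = comp_w a"
  by (simp_all add: comp_u_def comp_Ju_def comp_w_def g_sym)

lemma comp_linear:
  "comp_u (a + b) = comp_u a + comp_u b" "comp_u (r *\<^sub>R a) = r * comp_u a" "comp_u (- a) = - comp_u a"
  "comp_u (a - b) = comp_u a - comp_u b" "comp_u 0 = 0"
  "comp_Ju (a + b) = comp_Ju a + comp_Ju b" "comp_Ju (r *\<^sub>R a) = r * comp_Ju a" "comp_Ju (- a) = - comp_Ju a"
  "comp_Ju (a - b) = comp_Ju a - comp_Ju b" "comp_Ju 0 = 0"
  "comp_w (a + b) = comp_w a + comp_w b" "comp_w (r *\<^sub>R a) = r * comp_w a" "comp_w (- a) = - comp_w a"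
  "comp_w (a - b) = comp_w a - comp_w b" "comp_w 0 = 0"
  by (simp_all add: comp_u_def comp_Ju_def comp_w_def)

lemma comp_values:
  "comp_u u = 1/2" "comp_Ju u = 0" "comp_u (J a) = - comp_Ju a" "comp_Ju (J a) = comp_u a"
  "comp_u (D_sym a) = 0" "comp_u (D_skew a) = 0" "comp_Ju (D_sym a) = 0" "comp_Ju (D_skew a) = 0"
  "comp_u w = 0" "comp_Ju w = 0" "comp_w u = 0"
  "comp_w (J a) = - g a (J w)" "comp_w (D_sym a) = g a (D_sym w)" "comp_w (D_skew a) = - g a (D_skew w)"
  using mem_ND[OF D_sym_mem_N] mem_ND[OF D_skew_mem_N] mem_ND[OF w_mem_N]
  by (simp_all add: comp_u_def comp_Ju_def comp_w_def g_J_left g_sym[of u w] g_D_sym_left g_D_skew_left)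

lemma comp_N: "p \<in> N \<Longrightarrow> comp_u p = 0" "p \<in> N \<Longrightarrow> comp_Ju p = 0"
  unfolding N_def comp_u_def comp_Ju_def by simp_all

lemmas g_normal_forms = g_comp g_J_left g_D_sym_left g_D_skew_left comp_linear comp_values

lemma g_D_sym_swap: "g a (D_sym b) = g b (D_sym a)"
  using g_D_sym_left[of b a] g_sym[of "D_sym b" a] by simp

lemma g_D_skew_swap: "g a (D_skew b) = - g b (D_skew a)"
  using g_D_skew_left[of b a] g_sym[of "D_skew b" a] by simp

lemma g_J_D_sym_swap: "g a (J (D_sym b)) = - g b (J (D_sym a))"
  using g_J_swap[of a "D_sym b"] g_D_sym_left[of b "J a"] by simp

text \<open>Obtained by solving the defining conditions of the Bismut connection with an ansatz in
  \<open>\<lambda>\<close>, \<open>w\<close>, \<open>D_sym\<close> and \<open>D_skew\<close>.\<close>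

definition nabla :: "'v \<Rightarrow> 'v \<Rightarrow> 'v" where
  "nabla x y = (2 * g x u) *\<^sub>R D_skew y
    + (2 * g x (J u)) *\<^sub>R ((2 * g y u * lam) *\<^sub>R J u - (2 * g y (J u) * lam) *\<^sub>R u + D_sym (J y))
    + (2 * g y u) *\<^sub>R (- (2 * g w x) *\<^sub>R J u - D_sym x)
    + (2 * g y (J u)) *\<^sub>R ((2 * g w x) *\<^sub>R u - J (D_sym x))
    + (2 * g (D_sym x) y) *\<^sub>R u + (2 * g (J (D_sym x)) y) *\<^sub>R J u"

lemma nabla_J: "nabla x (J y) = J (nabla x y)"
  by (rule g_eqI) (simp add: nabla_def g_normal_forms; simp add: algebra_simps)

lemma nabla_metric: "g (nabla x y) z + g y (nabla x z) = 0"
  by (subst g_sym[of y]) (simp add: nabla_def g_normal_forms g_J_D_sym_swap[of z y] g_D_skew_swap[of z y] algebra_simps)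

lemma nabla_torsion_skew: "g (torsion br nabla x y) z = - g (torsion br nabla x z) y"
  apply (simp add: torsion_def br_eq D_eq_sym_plus_skew nabla_def g_normal_forms
      g_D_sym_swap[of y x] g_D_sym_swap[of z x] g_D_sym_swap[of z y]
      g_D_skew_swap[of z y] g_D_skew_swap[of y x] g_D_skew_swap[of z x]
      g_J_D_sym_swap[of z y] g_J_D_sym_swap[of y x] g_J_D_sym_swap[of z x])
  apply (simp only: ring_distribs)
  apply algebra
  done

lemma nabla_add_left: "nabla (a + b) y = nabla a y + nabla b y"
  and nabla_add_right: "nabla x (a + b) = nabla x a + nabla x b"
  and nabla_scale_left: "nabla (r *\<^sub>R a) y = r *\<^sub>R nabla a y"
  and nabla_scale_right: "nabla x (r *\<^sub>R a) = r *\<^sub>R nabla x a"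
  by (rule g_eqI, simp add: nabla_def g_normal_forms; algebra)+

lemma bilinear_nabla: "bilinear nabla"
  unfolding bilinear_def
  by (auto intro!: linearI simp: nabla_add_left nabla_add_right nabla_scale_left nabla_scale_right)

lemma bismut_eq_nabla: "bismut br J g = nabla"
  unfolding bismut_def
proof (rule the_equality)
  show "is_bismut_conn br J g nabla"
    unfolding is_bismut_conn_def using bilinear_nabla nabla_J nabla_metric nabla_torsion_skew by blast
  then show "nb = nabla" if "is_bismut_conn br J g nb" for nb
    using bismut_conn_unique that by blast
qed

definition nabla_torsion :: "'v \<Rightarrow> 'v \<Rightarrow> 'v \<Rightarrow> 'v" where
  "nabla_torsion x y z = nabla x (torsion br nabla y z) - torsion br nabla (nabla x y) z
     - torsion br nabla y (nabla x z)"

lemma BTP_iff_nabla_torsion: "BTP br J g \<longleftrightarrow> (\<forall>x y z. nabla_torsion x y z = 0)"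
  unfolding BTP_def bismut_eq_nabla Let_def nabla_torsion_def by simp

lemma nabla_torsion_eq_0:
  assumes "\<And>y. D_sym y = 0" and "D_skew w = 0" shows "nabla_torsion x y z = 0"
  apply (rule g_eqI)
  apply (simp add: nabla_torsion_def torsion_def br_eq D_eq_sym_plus_skew nabla_def g_normal_forms assms)
  apply algebra
  done

lemma nabla_torsion_zero_imp_D_sym_sq:
  assumes "p \<in> N" "g (nabla_torsion p u (J u)) (J p) = 0" shows "g p (D_sym (D_sym p)) = 0"
  using assms by (simp add: nabla_torsion_def torsion_def br_eq D_eq_sym_plus_skew nabla_def g_normal_forms comp_N)

lemma nabla_torsion_zero_imp_D_skew_w:
  assumes "\<And>y. D_sym y = 0" "g (nabla_torsion u u (J u)) t = 0" shows "g t (D_skew w) = 0"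
  using assms by (simp add: nabla_torsion_def torsion_def br_eq D_eq_sym_plus_skew nabla_def g_normal_forms)

lemma D_sym_eq_0_if_sq_vanishes: assumes "\<And>p. p \<in> N \<Longrightarrow> g p (D_sym (D_sym p)) = 0" shows "D_sym y = 0"
proof -
  have "g (D_sym (proj_N y)) (D_sym (proj_N y)) = 0"
    using assms[OF proj_N_mem_N] by (simp add: g_D_sym_left)
  then show ?thesis using g_pos D_sym_proj_N by fastforce
qed

lemma BTP_iff: "BTP br J g \<longleftrightarrow> (\<forall>y. D_sym y = 0) \<and> D_skew w = 0"
proof
  assume "BTP br J g"
  then have tor: "nabla_torsion x y z = 0" for x y z by (simp add: BTP_iff_nabla_torsion)
  then have S: "D_sym y = 0" for y
    using D_sym_eq_0_if_sq_vanishes nabla_torsion_zero_imp_D_sym_sq by simp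
  have "D_skew w = 0"
    using nabla_torsion_zero_imp_D_skew_w[OF S] tor by (intro g_eq_0I) (simp add: g_sym[of "D_skew w"])
  with S show "(\<forall>y. D_sym y = 0) \<and> D_skew w = 0" by blast
qed (simp add: BTP_iff_nabla_torsion nabla_torsion_eq_0)

lemma D_sym_eq_0_if_re_e: assumes "\<And>k. k \<in> {2..n} \<Longrightarrow> D_sym (re_e k) = 0" shows "D_sym y = 0"
proof -
  have "D_sym y = (\<Sum>k\<in>{1..n}. (2 * g y (re_e k)) *\<^sub>R D_sym (re_e k) + (2 * g y (J (re_e k))) *\<^sub>R J (D_sym (re_e k)))"
    by (subst frame_expansion) (simp add: D_sym_sum)
  also have "\<dots> = 0"
  proof (rule sum.neutral, intro ballI)
    fix k assume "k \<in> {1..n}"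
    then consider "k = 1" | "k \<in> {2..n}" by fastforce
    then show "(2 * g y (re_e k)) *\<^sub>R D_sym (re_e k) + (2 * g y (J (re_e k))) *\<^sub>R J (D_sym (re_e k)) = 0"
      using assms by cases auto
  qed
  finally show ?thesis .
qed

lemma g_D_re_e: assumes i: "i \<in> {2..n}" and k: "k \<in> {2..n}"
  shows "g (D (re_e k)) (re_e i) = - Re (A i k) / 2" and "g (D (re_e k)) (J (re_e i)) = Im (A i k) / 2"
proof -
  have "coord i (D (re_e k)) = - (\<Sum>j=2..n. cnj (A i j) * coord j (re_e k))"
    using coord_br_u[OF re_e_mem_N[OF k] i] D_eq_br_u[OF re_e_mem_N[OF k]] by simp
  also have "(\<Sum>j=2..n. cnj (A i j) * coord j (re_e k)) = (\<Sum>j=2..n. if j = k then cnj (A i k) / 2 else 0)"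
    by (rule sum.cong) (use k in \<open>auto simp: coord_re_e\<close>)
  finally have "coord i (D (re_e k)) = - cnj (A i k) / 2" using k by simp
  then show "g (D (re_e k)) (re_e i) = - Re (A i k) / 2" "g (D (re_e k)) (J (re_e i)) = Im (A i k) / 2"
    using coord_eq[of i "D (re_e k)"] i by (simp_all add: complex_eq_iff)
qed

lemma g_D_sym_re_e: assumes i: "i \<in> {2..n}" and k: "k \<in> {2..n}"
  shows "g (D_sym (re_e k)) (re_e i) = - (Re (A i k) + Re (A k i)) / 4"
    and "g (D_sym (re_e k)) (J (re_e i)) = (Im (A i k) - Im (A k i)) / 4"
proof -
  have sym: "g (D_sym a) b = (g (D a) b + g (D b) a) / 2" for a b
    by (simp add: D_sym_def g_D_adj_left g_sym[of a])
  show "g (D_sym (re_e k)) (re_e i) = - (Re (A i k) + Re (A k i)) / 4"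
    using g_D_re_e[OF i k] g_D_re_e[OF k i] by (simp add: sym)
  have "g (D (J (re_e i))) (re_e k) = - Im (A k i) / 2"
    using g_D_re_e(2)[OF k i] by (simp add: D_J g_J_left g_J_swap[of "D (re_e i)"])
  then show "g (D_sym (re_e k)) (J (re_e i)) = (Im (A i k) - Im (A k i)) / 4"
    using g_D_re_e[OF i k] by (simp add: sym)
qed

lemma D_sym_eq_0_iff: "(\<forall>y. D_sym y = 0) \<longleftrightarrow> (\<forall>i\<in>{2..n}. \<forall>j\<in>{2..n}. A i j + cnj (A j i) = 0)"
proof
  assume S: "\<forall>y. D_sym y = 0"
  show "\<forall>i\<in>{2..n}. \<forall>j\<in>{2..n}. A i j + cnj (A j i) = 0"
  proof (intro ballI)
    fix i j assume "i \<in> {2..n}" "j \<in> {2..n}"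
    then have "Re (A i j) + Re (A j i) = 0" "Im (A i j) - Im (A j i) = 0"
      using g_D_sym_re_e[of i j] S by simp_all
    then show "A i j + cnj (A j i) = 0" by (simp add: complex_eq_iff)
  qed
next
  assume A: "\<forall>i\<in>{2..n}. \<forall>j\<in>{2..n}. A i j + cnj (A j i) = 0"
  have "D_sym (re_e k) = 0" if k: "k \<in> {2..n}" for k
  proof (rule eq_0_if_g_re_e_eq_0)
    fix i assume "i \<in> {1..n}"
    then consider "i = 1" | "i \<in> {2..n}" by fastforce
    then show "g (D_sym (re_e k)) (re_e i) = 0 \<and> g (D_sym (re_e k)) (J (re_e i)) = 0"
    proof cases
      case 2
      then have "Re (A i k) + Re (A k i) = 0" "Im (A i k) - Im (A k i) = 0"
        using A k by (auto simp: complex_eq_iff)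
      then show ?thesis using g_D_sym_re_e[OF 2 k] by simp
    qed (simp add: mem_ND[OF D_sym_mem_N])
  qed
  then show "\<forall>y. D_sym y = 0" using D_sym_eq_0_if_re_e by blast
qed

lemma coord_br_u_w: assumes i: "i \<in> {2..n}" shows "coord i (br u w) = \<i> / 2 * cnj (\<Sum>j=2..n. A i j * v j)"
proof -
  have "coord i (br u w) = - (\<Sum>j=2..n. cnj (A i j) * (- \<i> * cnj (v j) / 2))"
    using coord_br_u[OF w_mem_N i] by (simp add: coord_w)
  then show ?thesis by (simp add: sum_distrib_left sum_negf algebra_simps)
qed

lemma D_skew_w_eq_0_iff:
  assumes "\<And>y. D_sym y = 0" shows "D_skew w = 0 \<longleftrightarrow> (\<forall>i\<in>{2..n}. (\<Sum>j=2..n. A i j * v j) = 0)"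
proof -
  have "D_skew w = br u w" using D_eq_br_u[OF w_mem_N] D_eq_sym_plus_skew assms by simp
  moreover have "br u w = 0 \<longleftrightarrow> (\<forall>i\<in>{2..n}. coord i (br u w) = 0)"
    using br_u_mem_N[OF w_mem_N] coord_zero
    by (auto simp: mem_N_iff_coord1 intro: eq_0_if_coord1_coord_eq_0)
  ultimately show ?thesis by (simp add: coord_br_u_w del: cnj_sum)
qed

lemma nabla_diff_left: "nabla (a - b) y = nabla a y - nabla b y"
  and nabla_diff_right: "nabla x (a - b) = nabla x a - nabla x b"
  using bilinear_nabla by (simp_all add: bilinear_lsub bilinear_rsub)

definition curv :: "'v \<Rightarrow> 'v \<Rightarrow> 'v \<Rightarrow> 'v" where
  "curv x y z = nabla x (nabla y z) - nabla y (nabla x z) - nabla (br x y) z"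

lemma ccurv_eq: "ccurv br nabla (a1, b1) (a2, b2) (a3, b3) =
  (curv a1 a2 a3 - curv a1 b2 b3 - curv b1 a2 b3 - curv b1 b2 a3,
   curv a1 a2 b3 + curv a1 b2 a3 + curv b1 a2 a3 - curv b1 b2 b3)"
  by (simp add: ccurv_def cbil_def curv_def nabla_add_left nabla_add_right nabla_diff_left nabla_diff_right
      algebra_simps)

lemma curv_eq:
  assumes "\<And>y. D_sym y = 0" and "D_skew w = 0"
  shows "curv x y z = (8 * (lam\<^sup>2 + 2 * comp_w w) * (comp_u x * comp_Ju y - comp_Ju x * comp_u y))
     *\<^sub>R (comp_u z *\<^sub>R J u - comp_Ju z *\<^sub>R u)"
  apply (rule g_eqI)
  apply (simp add: curv_def br_eq D_eq_sym_plus_skew nabla_def g_normal_forms assms)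
  apply algebra
  done

lemma cmetric_zero_left: "cmetric g 0 z = 0"
  by (simp add: cmetric_def zero_prod_def Complex_eq_0)

lemma prod_eq_0_iff: "(a, b) = 0 \<longleftrightarrow> a = 0 \<and> b = 0"
  by (simp add: zero_prod_def)

context
  assumes D_sym_0: "\<And>y. D_sym y = 0" and D_skew_w_0: "D_skew w = 0"
begin

lemma ccurv_g10_g10: "ccurv br nabla (a, - J a) (b, - J b) (c1, c2) = 0"
  and ccurv_g01_g01: "ccurv br nabla (a, J a) (b, J b) (c1, c2) = 0"
  unfolding ccurv_eq curv_eq[OF D_sym_0 D_skew_w_0] prod_eq_0_iff
  by (intro conjI g_eqI; simp add: g_normal_forms algebra_simps)+

lemma ccurv_N: assumes "p \<in> N"
  shows "ccurv br nabla (p, - J p) Y Z = 0" and "ccurv br nabla X Y (p, - J p) = 0"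
proof -
  have "ccurv br nabla (p, - J p) (a2, b2) (a3, b3) = 0" "ccurv br nabla (a1, b1) (a2, b2) (p, - J p) = 0"
    for a1 b1 a2 b2 a3 b3
    unfolding ccurv_eq curv_eq[OF D_sym_0 D_skew_w_0] prod_eq_0_iff
    using comp_N[OF assms] by (simp_all add: g_normal_forms)
  then show "ccurv br nabla (p, - J p) Y Z = 0" "ccurv br nabla X Y (p, - J p) = 0"
    by (metis surj_pair)+
qed

lemma BKL_if: "BKL n br J g e"
proof -
  have "cmetric g (ccurv br nabla (e i) (cconj (e j)) (e k)) (cconj (e l))
      = cmetric g (ccurv br nabla (e k) (cconj (e j)) (e i)) (cconj (e l))"
    if "i \<in> {1..n}" "k \<in> {1..n}" for i j k l
  proof -
    have "i = k \<or> i \<in> {2..n} \<or> k \<in> {2..n}" using that by auto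
    then consider "i = k" | "i \<in> {2..n}" | "k \<in> {2..n}" by blast
    then show ?thesis
      by cases (simp_all add: e_eq re_e_mem_N ccurv_N cmetric_zero_left)
  qed
  moreover have "ccurv br nabla X Y Z = 0" if "X \<in> g10 J" "Y \<in> g10 J" for X Y Z
    using that unfolding g10_def by (cases Z) (auto simp: ccurv_g10_g10)
  moreover have "ccurv br nabla X Y Z = 0" if "X \<in> g01 J" "Y \<in> g01 J" for X Y Z
    using that unfolding g01_def by (cases Z) (auto simp: ccurv_g01_g01)
  ultimately show ?thesis
    unfolding BKL_def bismut_eq_nabla Let_def by blast
qed

end

text \<open>\<open>curv_coeff a b c d\<close> is \<open>R\<^sup>b(X\<^sub>a, X\<^bsub>b\<^esub>\<^sup>-, X\<^sub>c, X\<^bsub>d\<^esub>\<^sup>-)\<close> with \<open>X\<^sub>a = a - \<i> J a\<close>;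
  for \<open>a = re_e i\<close> this is a frame component \<open>R\<^sup>b\<^sub>i\<^sub>j\<^sub>k\<^sub>l\<close>.\<close>

definition curv_coeff :: "'v \<Rightarrow> 'v \<Rightarrow> 'v \<Rightarrow> 'v \<Rightarrow> complex" where
  "curv_coeff a b c d = cmetric g (ccurv br nabla (a, - J a) (b, J b) (c, - J c)) (d, J d)"

lemma curv_coeff_defect_D_sym:
  assumes "p \<in> N"
  shows "Re (curv_coeff u u p p) - Re (curv_coeff p u u p) + 2 * (Re (curv_coeff u p p u) - Re (curv_coeff p p u u))
    = - 24 * g p (D_sym (D_sym p))"
  using assms
  apply (simp add: curv_coeff_def ccurv_eq cmetric_def N_def curv_def br_eq D_eq_sym_plus_skew nabla_def g_normal_forms)
  apply (simp add: field_simps)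
  done

lemma curv_coeff_defect_w:
  assumes "p \<in> N"
  shows "Re (curv_coeff u u p u) - Re (curv_coeff p u u u) = 2 * (g p (J (D_sym w)) + g p (J (D_skew w)))"
    and "Im (curv_coeff u u p u) - Im (curv_coeff p u u u) = - 2 * (g p (D_sym w) + g p (D_skew w))"
  using assms
  apply (simp_all add: curv_coeff_def ccurv_eq cmetric_def N_def curv_def br_eq D_eq_sym_plus_skew nabla_def
      g_normal_forms)
  apply (simp_all add: field_simps)
  done

lemma BKL_curv_coeff_sym:
  assumes "BKL n br J g e" and k: "k \<in> {2..n}"
  shows "curv_coeff u u (re_e k) (re_e k) = curv_coeff (re_e k) u u (re_e k)"
    and "curv_coeff u (re_e k) (re_e k) u = curv_coeff (re_e k) (re_e k) u u"
    and "curv_coeff u u (re_e k) u = curv_coeff (re_e k) u u u"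
proof -
  have sym: "cmetric g (ccurv br nabla (e i) (cconj (e j)) (e k)) (cconj (e l))
      = cmetric g (ccurv br nabla (e k) (cconj (e j)) (e i)) (cconj (e l))"
    if "i \<in> {1..n}" "j \<in> {1..n}" "k \<in> {1..n}" "l \<in> {1..n}" for i j k l
    using assms(1) that unfolding BKL_def bismut_eq_nabla Let_def by blast
  have k1: "k \<in> {1..n}" using k by simp
  note frame = curv_coeff_def e_eq[OF k1] cconj_e_eq[OF k1] cconj_def
  show "curv_coeff u u (re_e k) (re_e k) = curv_coeff (re_e k) u u (re_e k)"
    using sym[OF one_mem one_mem k1 k1] by (simp add: frame)
  show "curv_coeff u (re_e k) (re_e k) u = curv_coeff (re_e k) (re_e k) u u"
    using sym[OF one_mem k1 k1 one_mem] by (simp add: frame)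
  show "curv_coeff u u (re_e k) u = curv_coeff (re_e k) u u u"
    using sym[OF one_mem one_mem k1 one_mem] by (simp add: frame)
qed

lemma BKL_only_if:
  assumes BKL: "BKL n br J g e" shows "(\<forall>y. D_sym y = 0) \<and> D_skew w = 0"
proof -
  have "D_sym (re_e k) = 0" if k: "k \<in> {2..n}" for k
  proof -
    have "g (D_sym (re_e k)) (D_sym (re_e k)) = 0"
      using curv_coeff_defect_D_sym[OF re_e_mem_N[OF k]] BKL_curv_coeff_sym[OF BKL k]
      by (simp add: g_D_sym_left)
    then show ?thesis using g_pos by fastforce
  qed
  then have S: "D_sym y = 0" for y by (rule D_sym_eq_0_if_re_e)
  have "D_skew w = 0"
  proof (rule eq_0_if_g_re_e_eq_0)
    fix i assume "i \<in> {1..n}"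
    then consider "i = 1" | "i \<in> {2..n}" by fastforce
    then show "g (D_skew w) (re_e i) = 0 \<and> g (D_skew w) (J (re_e i)) = 0"
    proof cases
      case 2
      then have "g (re_e i) (J (D_skew w)) = 0" "g (re_e i) (D_skew w) = 0"
        using curv_coeff_defect_w[OF re_e_mem_N] BKL_curv_coeff_sym[OF BKL] S by simp_all
      then show ?thesis using g_J_swap[of "D_skew w" "re_e i"] g_sym[of "D_skew w" "re_e i"] by simp
    qed (simp add: mem_ND[OF D_skew_mem_N])
  qed
  with S show ?thesis by blast
qed

end

theorem proposition1:
  fixes br :: "'v::euclidean_space \<Rightarrow> 'v \<Rightarrow> 'v" and J :: "'v \<Rightarrow> 'v" and g :: "'v \<Rightarrow> 'v \<Rightarrow> real"
    and n :: nat and e :: "nat \<Rightarrow> 'v \<times> 'v" and \<phi> :: "nat \<Rightarrow> 'v \<times> 'v \<Rightarrow> complex"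
    and lam :: real and v :: "nat \<Rightarrow> complex" and A :: "nat \<Rightarrow> nat \<Rightarrow> complex"
  assumes "DIM('v) = 2 * n"
    and "hermitian_lie_algebra br J g"
    and "almost_abelian br"
    and "unitary_frame n J g e"
    and "dual_coframe n e \<phi>"
    and "admissible_eqs n br \<phi> lam v A"
  shows "(BTP br J g \<longleftrightarrow> BKL n br J g e) \<and>
         (BKL n br J g e \<longleftrightarrow>
            ((\<forall>i\<in>{2..n}. \<forall>j\<in>{2..n}. A i j + cnj (A j i) = 0) \<and>
             (\<forall>i\<in>{2..n}. (\<Sum>j=2..n. A i j * v j) = 0)))"
proof -
  interpret admissible_frame br J g n e \<phi> lam v A
    by unfold_locales (use assms in simp_all)
  have BKL: "BKL n br J g e \<longleftrightarrow> (\<forall>y. D_sym y = 0) \<and> D_skew w = 0"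
    using BKL_if BKL_only_if by blast
  show ?thesis
    unfolding BTP_iff BKL using D_sym_eq_0_iff D_skew_w_eq_0_iff by blast
qed

end
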